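(* Let $a_0\in[\lambda,1]$ with $\lambda>0$, and let $v$ solve $\partial_tv-a_0\partial_x^2v=f$ on $(-1,0)\times\mathbb{R}$. There is a constant $C$ depending only on $\lambda$ such that $$\sup_{(t,x)\in(-1,0)\times\mathbb{R}}(t+1)^{1/2}\eta(x)v^2(t,x)\le C\Big(\int_{-1}^0\int\eta f^2dxdt+\int\eta v^2dx\Big|_{t=-1}\Big).$$
   Context: $\eta(x)=\frac12e^{-|x|}$. Solutions are assumed sufficiently regular and decaying. *)

theory Defs
  imports "HOL-Analysis.Analysis"
begin

definition eta :: "real \<Rightarrow> real" where
  "eta x = exp (- \<bar>x\<bar>) / 2"

end

theory Submission
  imports Defs "HOL-Probability.Distributions" "HOL-Real_Asymp.Real_Asymp"
begin

text \<open>
  Fix \<open>(t0, x0)\<close> and let \<open>\<Phi>(s) = \<integral> K(t0 - s, y - x0) v(s, y) dy\<close>, where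
  \<open>K(\<tau>, z) = exp (-z\<^sup>2 / (4 a \<tau>)) / sqrt (4 \<pi> a \<tau>)\<close> is the heat kernel of \<open>a \<partial>\<^sub>x\<^sup>2\<close>.
  Since \<open>K\<close> solves the heat equation, two integrations by parts give
  \<open>\<Phi>'(s) = \<integral> K(t0 - s, y - x0) f(s, y) dy\<close>, and \<open>\<Phi>(s) \<rightarrow> v(t0, x0)\<close> as \<open>s \<rightarrow> t0\<close>;
  this is Duhamel's formula \<open>v(t0, x0) = \<Phi>(-1) + \<integral>\<^bsub>-1\<^esub>\<^bsup>t0\<^esup> \<Phi>'\<close>.
  Each pairing \<open>\<integral> K g\<close> is estimated by Cauchy-Schwarz with weight \<open>\<eta>\<close>,
  \<open>(\<integral> K g)\<^sup>2 \<le> (\<integral> K\<^sup>2/\<eta>) (\<integral> \<eta> g\<^sup>2)\<close>, and \<open>\<integral> K(\<tau>, \<cdot>)\<^sup>2/\<eta> \<le> exp (1 + |x0|) / sqrt (\<pi> a \<tau>)\<close>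
  because \<open>|y| \<le> (y - x0)\<^sup>2/(4 a \<tau>) + a \<tau> + |x0|\<close> and \<open>a \<tau> \<le> 1\<close>. The factor \<open>exp |x0|\<close> is
  cancelled by \<open>\<eta>(x0)\<close>, and the singularity \<open>1 / sqrt (t0 - s)\<close> is integrable in time, which
  produces the weight \<open>sqrt (t0 + 1)\<close>.
\<close>

lemma tendsto_integral_dominated_at:
  fixes s :: "'a::first_countable_topology \<Rightarrow> 'b \<Rightarrow> real" and f w :: "'b \<Rightarrow> real"
  assumes ev: "eventually (\<lambda>t. s t \<in> borel_measurable M \<and> (\<forall>y. \<bar>s t y\<bar> \<le> w y)) (at x within S)"
    and f: "f \<in> borel_measurable M" and w: "integrable M w"
    and lim: "\<And>y. ((\<lambda>t. s t y) \<longlongrightarrow> f y) (at x within S)"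
  shows "((\<lambda>t. \<integral>y. s t y \<partial>M) \<longlongrightarrow> (\<integral>y. f y \<partial>M)) (at x within S)"
proof (subst tendsto_at_iff_sequentially, intro allI impI)
  fix X :: "nat \<Rightarrow> 'a" assume X: "\<forall>i. X i \<in> S - {x}" "X \<longlonglongrightarrow> x"
  have fl: "filterlim X (at x within S) sequentially"
    using X by (intro filterlim_at_withinI) (auto simp: eventually_sequentially)
  have "eventually (\<lambda>i. s (X i) \<in> borel_measurable M \<and> (\<forall>y. \<bar>s (X i) y\<bar> \<le> w y)) sequentially"
    using ev fl by (rule eventually_compose_filterlim)
  then obtain N where N: "\<And>i. i \<ge> N \<Longrightarrow> s (X i) \<in> borel_measurable M \<and> (\<forall>y. \<bar>s (X i) y\<bar> \<le> w y)"
    by (auto simp: eventually_sequentially)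
  have lim_seq: "\<And>y. (\<lambda>i. s (X i) y) \<longlonglongrightarrow> f y"
    using lim fl by (rule filterlim_compose)
  have "(\<lambda>i. \<integral>y. s (X (i + N)) y \<partial>M) \<longlonglongrightarrow> (\<integral>y. f y \<partial>M)"
  proof (rule integral_dominated_convergence[where w=w])
    show "AE y in M. (\<lambda>i. s (X (i + N)) y) \<longlonglongrightarrow> f y"
      using lim_seq by (auto intro!: LIMSEQ_ignore_initial_segment)
    show "\<And>i. AE y in M. norm (s (X (i + N)) y) \<le> w y"
      using N by auto
  qed (use N f w in auto)
  then show "((\<lambda>t. \<integral>y. s t y \<partial>M) \<circ> X) \<longlonglongrightarrow> (\<integral>y. f y \<partial>M)"
    unfolding comp_def by (rule LIMSEQ_offset)
qed

lemma has_real_derivative_integral: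
  fixes u u' :: "real \<Rightarrow> 'b \<Rightarrow> real" and g :: "'b \<Rightarrow> real"
  assumes cd: "c < s" "s < d"
    and der: "\<And>t y. t \<in> {c<..<d} \<Longrightarrow> ((\<lambda>t. u t y) has_real_derivative u' t y) (at t)"
    and meas: "\<And>t. t \<in> {c<..<d} \<Longrightarrow> u t \<in> borel_measurable M"
    and int: "\<And>t. t \<in> {c<..<d} \<Longrightarrow> integrable M (u t)"
    and meas': "u' s \<in> borel_measurable M"
    and bd: "\<And>t y. t \<in> {c<..<d} \<Longrightarrow> \<bar>u' t y\<bar> \<le> g y" and g: "integrable M g"
  shows "((\<lambda>t. \<integral>y. u t y \<partial>M) has_real_derivative (\<integral>y. u' s y \<partial>M)) (at s)"
proof -
  define q where "q h y = (u (s + h) y - u s y) / h" for h y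
  have ev: "eventually (\<lambda>h. s + h \<in> {c<..<d}) (at (0::real))"
    unfolding eventually_at using cd
    by (intro exI[of _ "min (s - c) (d - s)"]) (auto simp: dist_real_def)
  have "((\<lambda>h. \<integral>y. q h y \<partial>M) \<longlongrightarrow> (\<integral>y. u' s y \<partial>M)) (at 0)"
  proof (rule tendsto_integral_dominated_at[where w=g])
    show "eventually (\<lambda>h. q h \<in> borel_measurable M \<and> (\<forall>y. \<bar>q h y\<bar> \<le> g y)) (at 0)"
      using ev
    proof eventually_elim
      case (elim h)
      have "s \<in> {c<..<d}" using cd by auto
      then have "q h \<in> borel_measurable M"
        unfolding q_def using meas[OF elim] meas[of s] by measurable
      moreover have "\<bar>q h y\<bar> \<le> g y" for y
      proof (cases "h = 0")
        case True then show ?thesis using bd[of s y] cd by (auto simp: q_def)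
      next
        case False
        have "norm (u (s + h) y - u s y) \<le> g y * norm (s + h - s)"
          by (rule field_differentiable_bound[where S="{c<..<d}" and f'="\<lambda>t. u' t y"])
             (use elim cd in \<open>auto intro!: has_field_derivative_at_within der bd\<close>)
        then show ?thesis using False by (simp add: q_def divide_simps abs_mult)
      qed
      ultimately show ?case by auto
    qed
    show "\<And>y. ((\<lambda>h. q h y) \<longlongrightarrow> u' s y) (at 0)"
      using der cd unfolding q_def DERIV_def by auto
  qed (use meas' g in auto)
  moreover have "eventually (\<lambda>h. (\<integral>y. q h y \<partial>M) = ((\<integral>y. u (s + h) y \<partial>M) - (\<integral>y. u s y \<partial>M)) / h) (at 0)"
    using ev
  proof eventually_elim
    case (elim h)
    then show ?case unfolding q_def using int[OF elim] int[of s] cd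
      by (simp add: integral_diff)
  qed
  ultimately show ?thesis unfolding DERIV_def
    by (subst (asm) tendsto_cong) auto
qed

lemma tendsto_zero_mult_bounded:
  fixes p q :: "'a \<Rightarrow> real"
  assumes "(p \<longlongrightarrow> 0) F" "\<And>y. \<bar>q y\<bar> \<le> B"
  shows "((\<lambda>y. p y * q y) \<longlongrightarrow> 0) F"
proof -
  have "((\<lambda>y. \<bar>p y\<bar> * B) \<longlongrightarrow> 0) F"
    using assms(1) by (intro tendsto_mult_left_zero tendsto_rabs_zero)
  moreover have "eventually (\<lambda>y. norm (p y * q y) \<le> \<bar>p y\<bar> * B) F"
    using assms(2) by (intro always_eventually) (auto simp: abs_mult intro!: mult_left_mono)
  ultimately show ?thesis
    by (rule Lim_null_comparison[rotated])
qed

text \<open>The integrand is the derivative of the Wronskian \<open>p q' - p' q\<close>, which vanishes at \<open>\<plusminus>\<infinity>\<close>.\<close>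

lemma Green_identity_lborel:
  fixes p p' p'' q q' q'' :: "real \<Rightarrow> real"
  assumes dp: "\<And>y. (p has_real_derivative p' y) (at y)" "\<And>y. (p' has_real_derivative p'' y) (at y)"
    and dq: "\<And>y. (q has_real_derivative q' y) (at y)" "\<And>y. (q' has_real_derivative q'' y) (at y)"
    and cont: "continuous_on UNIV q''" "continuous_on UNIV p''"
    and bq: "\<And>y. \<bar>q y\<bar> \<le> B" "\<And>y. \<bar>q' y\<bar> \<le> B"
    and lim: "(p \<longlongrightarrow> 0) at_top" "(p \<longlongrightarrow> 0) at_bot" "(p' \<longlongrightarrow> 0) at_top" "(p' \<longlongrightarrow> 0) at_bot"
    and int: "integrable lborel (\<lambda>y. p y * q'' y - p'' y * q y)"
  shows "(\<integral>y. p y * q'' y - p'' y * q y \<partial>lborel) = 0"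
proof -
  define H where "H y = p y * q' y - p' y * q y" for y
  have "isCont f y" if "f \<in> {p, p', q, q', p'', q''}" for f y
    using that DERIV_isCont[OF dp(1)] DERIV_isCont[OF dp(2)] DERIV_isCont[OF dq(1)] DERIV_isCont[OF dq(2)]
      cont by (auto simp: continuous_on_eq_continuous_at)
  then have cont_integrand: "isCont (\<lambda>y. p y * q'' y - p'' y * q y) y" for y
    by (intro continuous_intros) auto
  have "(H \<longlongrightarrow> 0 - 0) at_top" "(H \<longlongrightarrow> 0 - 0) at_bot"
    unfolding H_def
    by (rule tendsto_diff[OF tendsto_zero_mult_bounded[OF lim(1) bq(2)] tendsto_zero_mult_bounded[OF lim(3) bq(1)]],
        rule tendsto_diff[OF tendsto_zero_mult_bounded[OF lim(2) bq(2)] tendsto_zero_mult_bounded[OF lim(4) bq(1)]])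
  then have "(LBINT y=-\<infinity>..\<infinity>. p y * q'' y - p'' y * q y) = 0 - 0"
  proof (intro interval_integral_FTC_integrable[where F=H])
    show "(H has_vector_derivative p y * q'' y - p'' y * q y) (at y)" for y
      unfolding H_def has_real_derivative_iff_has_vector_derivative[symmetric]
      by (rule derivative_eq_intros dp dq refl)+ (simp add: algebra_simps)
    show "set_integrable lborel (einterval (-\<infinity>) \<infinity>) (\<lambda>y. p y * q'' y - p'' y * q y)"
      using int by (simp add: set_integrable_def)
  qed (use cont_integrand in \<open>simp_all add: ereal_tendsto_simps1\<close>)
  then show ?thesis
    by (simp add: interval_lebesgue_integral_def set_lebesgue_integral_def)
qed

lemma has_integral_inverse_sqrt_diff:
  assumes "c < b"
  shows "((\<lambda>s. 1 / sqrt (b - s)) has_integral 2 * sqrt (b - c)) {c<..<b}"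
proof -
  have "((\<lambda>s. 1 / sqrt (b - s)) has_integral (-2 * sqrt (b - b)) - (-2 * sqrt (b - c))) {c..b}"
  proof (rule fundamental_theorem_of_calculus_interior)
    fix s assume s: "s \<in> {c<..<b}"
    have "((\<lambda>s. -2 * sqrt (b - s)) has_real_derivative 1 / sqrt (b - s)) (at s)"
      using s by (auto intro!: derivative_eq_intros simp: field_simps)
    then show "((\<lambda>s. -2 * sqrt (b - s)) has_vector_derivative 1 / sqrt (b - s)) (at s)"
      by (simp add: has_real_derivative_iff_has_vector_derivative)
  qed (use assms in \<open>auto intro!: continuous_intros\<close>)
  then show ?thesis
    by (simp add: has_integral_open_interval[of _ _ c b, unfolded box_real])
qed

lemma abs_mult_le_weighted_AM_GM:
  fixes k g e eps :: real
  assumes "eps > 0" "e > 0"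
  shows "\<bar>k * g\<bar> \<le> k\<^sup>2 / e / (2 * eps) + eps / 2 * (e * g\<^sup>2)"
proof -
  have "0 \<le> (\<bar>k\<bar> - eps * e * \<bar>g\<bar>)\<^sup>2" by simp
  then have "2 * eps * e * (\<bar>k\<bar> * \<bar>g\<bar>) \<le> k\<^sup>2 + (eps * e)\<^sup>2 * g\<^sup>2"
    by (simp add: power2_eq_square algebra_simps)
  then show ?thesis using assms by (simp add: field_simps power2_eq_square abs_mult)
qed

text \<open>Optimising the AM-GM bound over \<open>eps\<close> turns it into a Cauchy-Schwarz type bound.\<close>

lemma sq_le_mult_if_AM_GM_bounds:
  fixes X P Q :: real
  assumes P: "P \<ge> 0" and Q: "Q \<ge> 0" and h: "\<And>eps. eps > 0 \<Longrightarrow> \<bar>X\<bar> \<le> P / (2 * eps) + eps / 2 * Q"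
  shows "X\<^sup>2 \<le> P * Q"
proof (cases "X = 0")
  case True then show ?thesis using P Q by simp
next
  case False
  then have X: "\<bar>X\<bar> > 0" by simp
  show ?thesis
  proof (cases "Q = 0")
    case True
    define eps where "eps = (P + 1) / \<bar>X\<bar>"
    have "eps > 0" unfolding eps_def using P X by simp
    from h[OF this] have "\<bar>X\<bar> \<le> P / (2 * eps)" using True by simp
    also have "\<dots> = P * \<bar>X\<bar> / (2 * (P + 1))" unfolding eps_def using X P by (simp add: field_simps)
    also have "\<dots> < \<bar>X\<bar>"
      using P X by (auto simp: divide_less_eq algebra_simps intro!: add_nonneg_pos)
    finally show ?thesis by simp
  next
    case False
    then have Qp: "Q > 0" using Q by simp
    define eps where "eps = \<bar>X\<bar> / Q"
    have "eps > 0" unfolding eps_def using Qp X by simp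
    from h[OF this] have "\<bar>X\<bar> \<le> P * Q / (2 * \<bar>X\<bar>) + \<bar>X\<bar> / 2"
      unfolding eps_def using Qp X by (simp add: field_simps)
    then have "\<bar>X\<bar> * \<bar>X\<bar> \<le> P * Q" using X by (simp add: field_simps)
    then show ?thesis by (simp add: power2_eq_square)
  qed
qed

section \<open>The heat kernel\<close>

definition heat_kernel :: "real \<Rightarrow> real \<Rightarrow> real \<Rightarrow> real" where
  "heat_kernel a \<tau> z = exp (- z\<^sup>2 / (4*a*\<tau>)) / sqrt (4*pi*a*\<tau>)"

definition heat_kernel_z :: "real \<Rightarrow> real \<Rightarrow> real \<Rightarrow> real" where
  "heat_kernel_z a \<tau> z = - z / (2*a*\<tau>) * heat_kernel a \<tau> z"

definition heat_kernel_zz :: "real \<Rightarrow> real \<Rightarrow> real \<Rightarrow> real" where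
  "heat_kernel_zz a \<tau> z = (z\<^sup>2 / (4*a\<^sup>2*\<tau>\<^sup>2) - 1 / (2*a*\<tau>)) * heat_kernel a \<tau> z"

lemma heat_kernel_pos: "a > 0 \<Longrightarrow> \<tau> > 0 \<Longrightarrow> heat_kernel a \<tau> z > 0"
  by (simp add: heat_kernel_def)

lemma heat_kernel_measurable [measurable]: "(\<lambda>y. heat_kernel a \<tau> (y - x0)) \<in> borel_measurable borel"
  unfolding heat_kernel_def by measurable

lemma heat_kernel_zz_measurable [measurable]: "(\<lambda>y. heat_kernel_zz a \<tau> (y - x0)) \<in> borel_measurable borel"
  unfolding heat_kernel_zz_def heat_kernel_def by measurable

lemma continuous_on_heat_kernel_zz:
  "a > 0 \<Longrightarrow> \<tau> > 0 \<Longrightarrow> continuous_on UNIV (\<lambda>y. heat_kernel_zz a \<tau> (y - x0))"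
  unfolding heat_kernel_zz_def heat_kernel_def by (intro continuous_intros) auto

lemma has_real_derivative_heat_kernel:
  assumes "a > 0" "\<tau> > 0"
  shows "(heat_kernel a \<tau> has_real_derivative heat_kernel_z a \<tau> z) (at z)"
  unfolding heat_kernel_z_def heat_kernel_def[abs_def] using assms
  by (auto intro!: derivative_eq_intros simp: field_simps power2_eq_square)

lemma has_real_derivative_heat_kernel_z:
  assumes "a > 0" "\<tau> > 0"
  shows "(heat_kernel_z a \<tau> has_real_derivative heat_kernel_zz a \<tau> z) (at z)"
  unfolding heat_kernel_z_def[abs_def] heat_kernel_zz_def using assms
  by (auto intro!: derivative_eq_intros has_real_derivative_heat_kernel[unfolded heat_kernel_z_def]
      simp: field_simps power2_eq_square)

lemma heat_kernel_solves_heat_equation: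
  assumes a: "a > 0" and t: "\<tau> > 0"
  shows "((\<lambda>\<tau>. heat_kernel a \<tau> z) has_real_derivative a * heat_kernel_zz a \<tau> z) (at \<tau>)"
proof -
  define X where "X = 4*pi*a*\<tau>"
  define E where "E = exp (- z\<^sup>2 / (4*a*\<tau>))"
  have X: "X > 0" unfolding X_def using a t by simp
  have dE: "((\<lambda>\<tau>. exp (- z\<^sup>2 / (4*a*\<tau>))) has_real_derivative E * (z\<^sup>2 / (4*a*\<tau>\<^sup>2))) (at \<tau>)"
    unfolding E_def using a t by (auto intro!: derivative_eq_intros simp: field_simps power2_eq_square)
  have dS: "((\<lambda>\<tau>. sqrt (4*pi*a*\<tau>)) has_real_derivative (4*pi*a) / (2 * sqrt X)) (at \<tau>)"
    using X unfolding X_def by (auto intro!: derivative_eq_intros simp: field_simps)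
  have "((\<lambda>\<tau>. exp (- z\<^sup>2 / (4*a*\<tau>)) / sqrt (4*pi*a*\<tau>)) has_real_derivative
      (E * (z\<^sup>2 / (4*a*\<tau>\<^sup>2)) * sqrt X - E * ((4*pi*a) / (2 * sqrt X))) / (sqrt X * sqrt X)) (at \<tau>)"
    using DERIV_divide[OF dE dS] X a t unfolding X_def E_def by simp
  moreover have "(E * (z\<^sup>2 / (4*a*\<tau>\<^sup>2)) * sqrt X - E * ((4*pi*a) / (2 * sqrt X))) / (sqrt X * sqrt X)
      = a * ((z\<^sup>2 / (4*a\<^sup>2*\<tau>\<^sup>2) - 1 / (2*a*\<tau>)) * (E / sqrt X))"
  proof -
    have sq: "sqrt X * sqrt X = X" using X by simp
    have "sqrt X > 0" using X by simp
    then show ?thesis unfolding sq using a t X unfolding X_def by (simp add: field_simps power2_eq_square)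
  qed
  ultimately show ?thesis unfolding heat_kernel_zz_def heat_kernel_def E_def X_def by simp
qed

lemma has_real_derivative_heat_kernel_backward:
  assumes "a > 0" "s < t0"
  shows "((\<lambda>s. heat_kernel a (t0 - s) z) has_real_derivative - a * heat_kernel_zz a (t0 - s) z) (at s)"
proof -
  have "((\<lambda>s. t0 - s) has_real_derivative -1) (at s)"
    by (auto intro!: derivative_eq_intros)
  from DERIV_chain2[OF heat_kernel_solves_heat_equation this] assms show ?thesis
    by simp
qed

lemma heat_kernel_shift_eq_normal_density:
  "a > 0 \<Longrightarrow> \<tau> > 0 \<Longrightarrow> heat_kernel a \<tau> (y - x0) = normal_density x0 (sqrt (2*a*\<tau>)) y"
  by (simp add: heat_kernel_def normal_density_def field_simps power2_commute)

lemma normal_density_affine: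
  assumes "\<sigma> > 0"
  shows "normal_density x0 \<sigma> (x0 + \<sigma> * w) = std_normal_density w / \<sigma>"
  using assms by (simp add: normal_density_def real_sqrt_mult power_mult_distrib field_simps)

lemma integrable_heat_kernel: "a > 0 \<Longrightarrow> \<tau> > 0 \<Longrightarrow> integrable lborel (\<lambda>y. heat_kernel a \<tau> (y - x0))"
  by (simp add: heat_kernel_shift_eq_normal_density)

lemma integral_heat_kernel: "a > 0 \<Longrightarrow> \<tau> > 0 \<Longrightarrow> (\<integral>y. heat_kernel a \<tau> (y - x0) \<partial>lborel) = 1"
  by (simp add: heat_kernel_shift_eq_normal_density)

lemma integrable_heat_kernel_quadratic:
  assumes "a > 0" "\<tau> > 0"
  shows "integrable lborel (\<lambda>y. (A * (y - x0)\<^sup>2 + B) * heat_kernel a \<tau> (y - x0))"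
proof -
  have "integrable lborel (\<lambda>y. heat_kernel a \<tau> (y - x0) * \<bar>y - x0\<bar> ^ 2)"
    using assms integrable_normal_moment_abs[where \<mu>=x0 and \<sigma>="sqrt (2*a*\<tau>)" and k=2]
    by (simp add: heat_kernel_shift_eq_normal_density)
  then have "integrable lborel (\<lambda>y. A * (heat_kernel a \<tau> (y - x0) * \<bar>y - x0\<bar>^2) + B * heat_kernel a \<tau> (y - x0))"
    using integrable_heat_kernel[OF assms, of x0] by simp
  then show ?thesis by (simp add: algebra_simps power2_abs)
qed

lemma heat_kernel_le_rescaled:
  assumes a: "a > 0" and t: "0 < \<tau>1" "\<tau>1 \<le> \<tau>" "\<tau> \<le> \<tau>2"
  shows "\<bar>heat_kernel a \<tau> z\<bar> \<le> sqrt (\<tau>2 / \<tau>1) * heat_kernel a \<tau>2 z"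
proof -
  have e: "exp (- z\<^sup>2 / (4*a*\<tau>)) \<le> exp (- z\<^sup>2 / (4*a*\<tau>2))"
    using a t by (auto simp: divide_simps intro!: mult_left_mono)
  have pp: "0 \<le> pi * (\<tau> * a)" "0 \<le> pi * (\<tau>1 * a)" "0 \<le> pi * (\<tau>2 * a)"
    using a t by auto
  have "1 / sqrt (4*pi*a*\<tau>) \<le> 1 / sqrt (4*pi*a*\<tau>1)"
    using a t pp by (auto simp: divide_simps)
  also have "\<dots> = sqrt (\<tau>2 / \<tau>1) / sqrt (4*pi*a*\<tau>2)"
    using a t pp by (simp add: real_sqrt_divide real_sqrt_mult field_simps)
  finally have s: "1 / sqrt (4*pi*a*\<tau>) \<le> sqrt (\<tau>2 / \<tau>1) / sqrt (4*pi*a*\<tau>2)" .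
  have "\<bar>heat_kernel a \<tau> z\<bar> = heat_kernel a \<tau> z"
    using heat_kernel_pos[OF a, of \<tau> z] t by simp
  also have "\<dots> = exp (- z\<^sup>2 / (4*a*\<tau>)) * (1 / sqrt (4*pi*a*\<tau>))"
    by (simp add: heat_kernel_def)
  also have "\<dots> \<le> exp (- z\<^sup>2 / (4*a*\<tau>2)) * (sqrt (\<tau>2 / \<tau>1) / sqrt (4*pi*a*\<tau>2))"
    by (intro mult_mono e s) (use pp in auto)
  also have "\<dots> = sqrt (\<tau>2 / \<tau>1) * heat_kernel a \<tau>2 z" by (simp add: heat_kernel_def)
  finally show ?thesis .
qed

lemma heat_kernel_zz_le_rescaled:
  assumes a: "a > 0" and t: "0 < \<tau>1" "\<tau>1 \<le> \<tau>" "\<tau> \<le> \<tau>2"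
  shows "\<bar>heat_kernel_zz a \<tau> z\<bar>
    \<le> (z\<^sup>2 / (4*a\<^sup>2*\<tau>1\<^sup>2) + 1 / (2*a*\<tau>1)) * (sqrt (\<tau>2 / \<tau>1) * heat_kernel a \<tau>2 z)"
proof -
  have "\<bar>z\<^sup>2 / (4*a\<^sup>2*\<tau>\<^sup>2) - 1 / (2*a*\<tau>)\<bar> \<le> z\<^sup>2 / (4*a\<^sup>2*\<tau>\<^sup>2) + 1 / (2*a*\<tau>)"
    using a t by (auto simp: abs_if)
  also have "\<dots> \<le> z\<^sup>2 / (4*a\<^sup>2*\<tau>1\<^sup>2) + 1 / (2*a*\<tau>1)"
    using a t by (intro add_mono divide_left_mono mult_left_mono mult_right_mono power_mono) auto
  finally show ?thesis unfolding heat_kernel_zz_def abs_mult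
    by (rule mult_mono[OF _ heat_kernel_le_rescaled[OF a t]]) (use a t in auto)
qed

lemma heat_kernel_tendsto_infinity:
  assumes "a > 0" "\<tau> > 0"
  shows "((\<lambda>y. heat_kernel a \<tau> (y - x0)) \<longlongrightarrow> 0) at_top"
    and "((\<lambda>y. heat_kernel a \<tau> (y - x0)) \<longlongrightarrow> 0) at_bot"
    and "((\<lambda>y. heat_kernel_z a \<tau> (y - x0)) \<longlongrightarrow> 0) at_top"
    and "((\<lambda>y. heat_kernel_z a \<tau> (y - x0)) \<longlongrightarrow> 0) at_bot"
proof -
  have top: "filterlim (\<lambda>y::real. y - x0) at_top at_top" by real_asymp
  have bot: "filterlim (\<lambda>y::real. y - x0) at_bot at_bot" by real_asymp
  note defs = heat_kernel_z_def[abs_def] heat_kernel_def[abs_def]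
  have lim: "(heat_kernel a \<tau> \<longlongrightarrow> 0) at_top" "(heat_kernel a \<tau> \<longlongrightarrow> 0) at_bot"
    "(heat_kernel_z a \<tau> \<longlongrightarrow> 0) at_top" "(heat_kernel_z a \<tau> \<longlongrightarrow> 0) at_bot"
    using assms unfolding defs by real_asymp+
  show "((\<lambda>y. heat_kernel a \<tau> (y - x0)) \<longlongrightarrow> 0) at_top"
    "((\<lambda>y. heat_kernel_z a \<tau> (y - x0)) \<longlongrightarrow> 0) at_top"
    using filterlim_compose[OF lim(1) top] filterlim_compose[OF lim(3) top] .
  show "((\<lambda>y. heat_kernel a \<tau> (y - x0)) \<longlongrightarrow> 0) at_bot"
    "((\<lambda>y. heat_kernel_z a \<tau> (y - x0)) \<longlongrightarrow> 0) at_bot"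
    using filterlim_compose[OF lim(2) bot] filterlim_compose[OF lim(4) bot] .
qed

lemma integrable_heat_kernel_mult_bounded:
  assumes a: "a > 0" and t: "\<tau> > 0" and w: "w \<in> borel_measurable lborel" and B: "\<And>y. \<bar>w y\<bar> \<le> B"
  shows "integrable lborel (\<lambda>y. heat_kernel a \<tau> (y - x0) * w y)"
proof (rule Bochner_Integration.integrable_bound)
  show "integrable lborel (\<lambda>y. heat_kernel a \<tau> (y - x0) * B)"
    using integrable_heat_kernel[OF a t] by simp
  show "AE y in lborel. norm (heat_kernel a \<tau> (y - x0) * w y) \<le> norm (heat_kernel a \<tau> (y - x0) * B)"
  proof (intro AE_I2)
    fix y
    have "\<bar>w y\<bar> \<le> \<bar>B\<bar>" using B[of y] by linarith
    then show "norm (heat_kernel a \<tau> (y - x0) * w y) \<le> norm (heat_kernel a \<tau> (y - x0) * B)"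
      using heat_kernel_pos[OF a t, of "y - x0"] by (simp add: abs_mult mult_left_mono)
  qed
qed (use w in measurable)

lemma integrable_heat_kernel_zz_mult_bounded:
  assumes a: "a > 0" and t: "\<tau> > 0" and w: "w \<in> borel_measurable lborel" and B: "\<And>y. \<bar>w y\<bar> \<le> B"
  shows "integrable lborel (\<lambda>y. heat_kernel_zz a \<tau> (y - x0) * w y)"
proof (rule Bochner_Integration.integrable_bound)
  define g where "g y = (\<bar>B\<bar> / (4*a\<^sup>2*\<tau>\<^sup>2) * (y - x0)\<^sup>2 + \<bar>B\<bar> / (2*a*\<tau>)) * heat_kernel a \<tau> (y - x0)" for y
  show "integrable lborel g"
    unfolding g_def by (rule integrable_heat_kernel_quadratic[OF a t])
  show "AE y in lborel. norm (heat_kernel_zz a \<tau> (y - x0) * w y) \<le> norm (g y)"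
  proof (intro AE_I2)
    fix y
    have "\<bar>w y\<bar> \<le> \<bar>B\<bar>" using B[of y] by linarith
    moreover have "\<bar>heat_kernel_zz a \<tau> (y - x0)\<bar>
        \<le> ((y - x0)\<^sup>2 / (4*a\<^sup>2*\<tau>\<^sup>2) + 1 / (2*a*\<tau>)) * (sqrt (\<tau> / \<tau>) * heat_kernel a \<tau> (y - x0))"
      by (rule heat_kernel_zz_le_rescaled[OF a t]) auto
    ultimately have "\<bar>heat_kernel_zz a \<tau> (y - x0) * w y\<bar>
        \<le> (((y - x0)\<^sup>2 / (4*a\<^sup>2*\<tau>\<^sup>2) + 1 / (2*a*\<tau>)) * heat_kernel a \<tau> (y - x0)) * \<bar>B\<bar>"
      unfolding abs_mult using t by (intro mult_mono) auto
    also have "\<dots> = g y"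
      by (simp add: g_def field_simps)
    finally show "norm (heat_kernel_zz a \<tau> (y - x0) * w y) \<le> norm (g y)" by simp
  qed
qed (use w in measurable)

lemma eta_pos: "eta x > 0"
  by (simp add: eta_def)

lemma eta_measurable [measurable]: "eta \<in> borel_measurable borel"
  unfolding eta_def[abs_def] by measurable

lemma integrable_exponential_density: "integrable lborel (exponential_density 1)"
proof (rule integrableI_nonneg)
  have "prob_space (density lborel (exponential_density 1))"
    by (rule prob_space_exponential_density) simp
  then have "emeasure (density lborel (exponential_density 1)) UNIV = 1"
    using prob_space.emeasure_space_1 by fastforce
  then show "(\<integral>\<^sup>+x. ennreal (exponential_density 1 x) \<partial>lborel) < \<infinity>"
    by (simp add: emeasure_density)
qed (simp_all add: exponential_density_nonneg)

text \<open>\<open>\<eta>\<close> is half the sum of the exponential density and its reflection.\<close>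

lemma integrable_eta: "integrable lborel eta"
proof (rule Bochner_Integration.integrable_bound)
  have "integrable lborel (\<lambda>x. exponential_density 1 (0 + (-1) * x))"
    using integrable_exponential_density by (rule lborel_integrable_real_affine) simp
  then show "integrable lborel (\<lambda>x. exponential_density 1 x + exponential_density 1 (0 + (-1) * x))"
    using integrable_exponential_density by simp
  show "AE x in lborel. norm (eta x) \<le> norm (exponential_density 1 x + exponential_density 1 (0 + (-1) * x))"
    by (intro AE_I2) (auto simp: eta_def exponential_density_def)
qed simp

lemma integrable_eta_mult_sq_bounded:
  assumes g: "g \<in> borel_measurable lborel" and B: "\<And>y. \<bar>g y\<bar> \<le> B"
  shows "integrable lborel (\<lambda>y. eta y * (g y)\<^sup>2)"
proof (rule Bochner_Integration.integrable_bound)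
  show "integrable lborel (\<lambda>y. eta y * B\<^sup>2)"
    using integrable_eta by simp
  show "AE y in lborel. norm (eta y * (g y)\<^sup>2) \<le> norm (eta y * B\<^sup>2)"
  proof (intro AE_I2)
    fix y
    have "\<bar>g y\<bar> \<le> \<bar>B\<bar>" using B[of y] by linarith
    then have "(g y)\<^sup>2 \<le> B\<^sup>2" by (simp add: abs_le_square_iff)
    then show "norm (eta y * (g y)\<^sup>2) \<le> norm (eta y * B\<^sup>2)"
      using eta_pos[of y] by (simp add: abs_mult)
  qed
qed (use g in measurable)

lemma weighted_sq_integral_nonneg: "0 \<le> (\<integral>y. eta y * (g y)\<^sup>2 \<partial>lborel)"
  by (intro integral_nonneg_AE AE_I2) (simp add: eta_def)

lemma heat_kernel_sq_div_eta_le: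
  assumes a: "a > 0" and t: "\<tau> > 0" and at: "a * \<tau> \<le> 1"
  shows "(heat_kernel a \<tau> (y - x0))\<^sup>2 / eta y
    \<le> exp (1 + \<bar>x0\<bar>) / sqrt (pi*a*\<tau>) * heat_kernel a \<tau> (y - x0)"
proof -
  define z where "z = y - x0"
  define E where "E = exp (- z\<^sup>2 / (4*a*\<tau>))"
  define S where "S = sqrt (4*pi*a*\<tau>)"
  have S: "S > 0" unfolding S_def using a t by simp
  have E: "E > 0" unfolding E_def by simp
  have S2: "sqrt (pi*a*\<tau>) = S / 2"
    unfolding S_def using a t by (simp add: real_sqrt_mult)
  have "4*a*\<tau> * \<bar>z\<bar> \<le> z\<^sup>2 + 4*(a*\<tau>)\<^sup>2"
    using sum_squares_ge_zero[of "\<bar>z\<bar> - 2*a*\<tau>" 0] by (simp add: power2_eq_square algebra_simps)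
  then have "\<bar>z\<bar> \<le> z\<^sup>2 / (4*a*\<tau>) + a*\<tau>"
    using a t by (simp add: field_simps power2_eq_square)
  then have "\<bar>y\<bar> - z\<^sup>2 / (4*a*\<tau>) \<le> 1 + \<bar>x0\<bar>"
    using at unfolding z_def by linarith
  then have "exp \<bar>y\<bar> * E \<le> exp (1 + \<bar>x0\<bar>)"
    unfolding E_def by (simp add: exp_add[symmetric])
  then have "2 * exp \<bar>y\<bar> * E * E / (S * S) \<le> 2 * exp (1 + \<bar>x0\<bar>) * E / (S * S)"
    using E S by (auto simp: divide_simps mult.assoc intro!: mult_left_mono mult_right_mono)
  moreover have "(heat_kernel a \<tau> (y - x0))\<^sup>2 / eta y = 2 * exp \<bar>y\<bar> * E * E / (S * S)"
    unfolding heat_kernel_def eta_def E_def S_def z_def by (simp add: power2_eq_square exp_minus field_simps)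
  moreover have "exp (1 + \<bar>x0\<bar>) / sqrt (pi*a*\<tau>) * heat_kernel a \<tau> (y - x0) = 2 * exp (1 + \<bar>x0\<bar>) * E / (S * S)"
    unfolding S2 unfolding heat_kernel_def E_def S_def z_def by simp
  ultimately show ?thesis by simp
qed

lemma heat_kernel_sq_div_eta_integral_le:
  assumes a: "a > 0" and t: "\<tau> > 0" and at: "a * \<tau> \<le> 1"
  shows "integrable lborel (\<lambda>y. (heat_kernel a \<tau> (y - x0))\<^sup>2 / eta y)"
    and "(\<integral>y. (heat_kernel a \<tau> (y - x0))\<^sup>2 / eta y \<partial>lborel) \<le> exp (1 + \<bar>x0\<bar>) / sqrt (pi*a*\<tau>)"
proof -
  let ?c = "exp (1 + \<bar>x0\<bar>) / sqrt (pi*a*\<tau>)"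
  have i: "integrable lborel (\<lambda>y. ?c * heat_kernel a \<tau> (y - x0))"
    using integrable_heat_kernel[OF a t] by simp
  show int: "integrable lborel (\<lambda>y. (heat_kernel a \<tau> (y - x0))\<^sup>2 / eta y)"
  proof (rule Bochner_Integration.integrable_bound[OF i])
    show "AE y in lborel. norm ((heat_kernel a \<tau> (y - x0))\<^sup>2 / eta y) \<le> norm (?c * heat_kernel a \<tau> (y - x0))"
    proof (intro AE_I2)
      fix y
      have "sqrt (pi*a*\<tau>) > 0" using a t by simp
      then show "norm ((heat_kernel a \<tau> (y - x0))\<^sup>2 / eta y) \<le> norm (?c * heat_kernel a \<tau> (y - x0))"
        using heat_kernel_sq_div_eta_le[OF a t at, of y x0] eta_pos[of y] heat_kernel_pos[OF a t, of "y - x0"]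
        by (simp add: abs_mult)
    qed
  qed measurable
  have "(\<integral>y. (heat_kernel a \<tau> (y - x0))\<^sup>2 / eta y \<partial>lborel) \<le> (\<integral>y. ?c * heat_kernel a \<tau> (y - x0) \<partial>lborel)"
    by (intro integral_mono int i heat_kernel_sq_div_eta_le[OF a t at])
  also have "\<dots> = ?c"
    using integral_heat_kernel[OF a t] by simp
  finally show "(\<integral>y. (heat_kernel a \<tau> (y - x0))\<^sup>2 / eta y \<partial>lborel) \<le> ?c" .
qed

lemma abs_integral_heat_kernel_mult_le:
  assumes a: "a > 0" and t: "\<tau> > 0" and at: "a * \<tau> \<le> 1"
    and g: "g \<in> borel_measurable lborel" and B: "\<And>y. \<bar>g y\<bar> \<le> B" and eps: "eps > 0"
  shows "\<bar>\<integral>y. heat_kernel a \<tau> (y - x0) * g y \<partial>lborel\<bar>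
    \<le> exp (1 + \<bar>x0\<bar>) / sqrt (pi*a*\<tau>) / (2 * eps) + eps / 2 * (\<integral>y. eta y * (g y)\<^sup>2 \<partial>lborel)"
proof -
  note i1 = heat_kernel_sq_div_eta_integral_le(1)[OF a t at, of x0]
  note i2 = integrable_eta_mult_sq_bounded[OF g B]
  have "\<bar>\<integral>y. heat_kernel a \<tau> (y - x0) * g y \<partial>lborel\<bar> \<le> (\<integral>y. \<bar>heat_kernel a \<tau> (y - x0) * g y\<bar> \<partial>lborel)"
    using integral_norm_bound[of lborel "\<lambda>y. heat_kernel a \<tau> (y - x0) * g y"] by simp
  also have "\<dots> \<le> (\<integral>y. (heat_kernel a \<tau> (y - x0))\<^sup>2 / eta y / (2 * eps) + eps / 2 * (eta y * (g y)\<^sup>2) \<partial>lborel)"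
  proof (intro integral_mono abs_mult_le_weighted_AM_GM eps eta_pos)
    show "integrable lborel (\<lambda>y. \<bar>heat_kernel a \<tau> (y - x0) * g y\<bar>)"
      using integrable_heat_kernel_mult_bounded[OF a t g B] by simp
    show "integrable lborel (\<lambda>y. (heat_kernel a \<tau> (y - x0))\<^sup>2 / eta y / (2 * eps) + eps / 2 * (eta y * (g y)\<^sup>2))"
      by (intro Bochner_Integration.integrable_add integrable_divide integrable_mult_right i1 i2)
  qed
  also have "\<dots> = (\<integral>y. (heat_kernel a \<tau> (y - x0))\<^sup>2 / eta y \<partial>lborel) / (2 * eps)
      + eps / 2 * (\<integral>y. eta y * (g y)\<^sup>2 \<partial>lborel)"
    by (simp only: Bochner_Integration.integral_add[OF integrable_divide[OF i1] integrable_mult_right[OF i2]]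
          integral_divide_zero integral_mult_right_zero)
  also have "\<dots> \<le> exp (1 + \<bar>x0\<bar>) / sqrt (pi*a*\<tau>) / (2 * eps) + eps / 2 * (\<integral>y. eta y * (g y)\<^sup>2 \<partial>lborel)"
    using divide_right_mono[OF heat_kernel_sq_div_eta_integral_le(2)[OF a t at, of x0], of "2 * eps"] eps
    by simp
  finally show ?thesis .
qed


section \<open>Bounded classical solutions on the strip \<open>[-1, 0] \<times> \<real>\<close>\<close>

lemma continuous_on_Times_UNIV_slice:
  assumes "continuous_on (S \<times> UNIV) (\<lambda>(t, x). w t x)" "t \<in> S"
  shows "continuous_on UNIV (w t)"
proof -
  have "continuous_on UNIV (\<lambda>y. (\<lambda>(t, x). w t x) (t, y))"
    by (rule continuous_on_compose2[OF assms(1)]) (use assms(2) in \<open>auto intro!: continuous_intros\<close>)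
  then show ?thesis by simp
qed

lemma bounded_image_Times_UNIV_abs_le:
  assumes "bounded ((\<lambda>(t, x). w t x) ` (S \<times> UNIV))"
  obtains B :: real where "\<And>t x. t \<in> S \<Longrightarrow> \<bar>w t x\<bar> \<le> B"
proof -
  obtain B where "\<forall>y\<in>(\<lambda>(t, x). w t x) ` (S \<times> UNIV). norm y \<le> B"
    using assms unfolding bounded_iff by blast
  then have "\<bar>w t x\<bar> \<le> B" if "t \<in> S" for t x
    using that by force
  then show ?thesis using that by blast
qed

locale bounded_heat_solution =
  fixes a :: real and v vt vx vxx f :: "real \<Rightarrow> real \<Rightarrow> real" and Bv Bt Bx Bxx :: real
  assumes a_pos: "0 < a" and a_le_1: "a \<le> 1"
    and continuous_v: "continuous_on ({-1..0} \<times> UNIV) (\<lambda>(t, x). v t x)"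
    and continuous_vt: "continuous_on ({-1<..<0} \<times> UNIV) (\<lambda>(t, x). vt t x)"
    and continuous_vxx: "continuous_on ({-1<..<0} \<times> UNIV) (\<lambda>(t, x). vxx t x)"
    and deriv_t: "\<And>t x. t \<in> {-1<..<0} \<Longrightarrow> ((\<lambda>s. v s x) has_real_derivative vt t x) (at t)"
    and deriv_x: "\<And>t x. t \<in> {-1<..<0} \<Longrightarrow> ((\<lambda>y. v t y) has_real_derivative vx t x) (at x)"
    and deriv_xx: "\<And>t x. t \<in> {-1<..<0} \<Longrightarrow> ((\<lambda>y. vx t y) has_real_derivative vxx t x) (at x)"
    and heat_equation: "\<And>t x. t \<in> {-1<..<0} \<Longrightarrow> vt t x - a * vxx t x = f t x"
    and bound_v: "\<And>t x. t \<in> {-1..0} \<Longrightarrow> \<bar>v t x\<bar> \<le> Bv"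
    and bound_vt: "\<And>t x. t \<in> {-1<..<0} \<Longrightarrow> \<bar>vt t x\<bar> \<le> Bt"
    and bound_vx: "\<And>t x. t \<in> {-1<..<0} \<Longrightarrow> \<bar>vx t x\<bar> \<le> Bx"
    and bound_vxx: "\<And>t x. t \<in> {-1<..<0} \<Longrightarrow> \<bar>vxx t x\<bar> \<le> Bxx"
begin

lemma v_measurable: "t \<in> {-1..0} \<Longrightarrow> v t \<in> borel_measurable lborel"
  using continuous_on_Times_UNIV_slice[OF continuous_v] by (simp add: borel_measurable_continuous_onI)

lemma vt_measurable: "t \<in> {-1<..<0} \<Longrightarrow> vt t \<in> borel_measurable lborel"
  using continuous_on_Times_UNIV_slice[OF continuous_vt] by (simp add: borel_measurable_continuous_onI)

lemma vxx_measurable: "t \<in> {-1<..<0} \<Longrightarrow> vxx t \<in> borel_measurable lborel"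
  using continuous_on_Times_UNIV_slice[OF continuous_vxx] by (simp add: borel_measurable_continuous_onI)

lemma tendsto_v_time:
  assumes "t \<in> {-1..0}"
  shows "((\<lambda>s. v s y) \<longlongrightarrow> v t y) (at t within {-1..0})"
proof -
  have "continuous_on {-1..0} (\<lambda>s. (\<lambda>(t, x). v t x) (s, y))"
    by (rule continuous_on_compose2[OF continuous_v]) (auto intro!: continuous_intros)
  then show ?thesis
    using assms unfolding continuous_on_def by simp
qed

lemma f_eq: "t \<in> {-1<..<0} \<Longrightarrow> f t = (\<lambda>x. vt t x - a * vxx t x)"
  using heat_equation by auto

lemma f_measurable: "t \<in> {-1<..<0} \<Longrightarrow> f t \<in> borel_measurable lborel"
  using f_eq vt_measurable vxx_measurable by simp

lemma f_abs_le:
  assumes t: "t \<in> {-1<..<0}"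
  shows "\<bar>f t x\<bar> \<le> Bt + Bxx"
proof -
  have "\<bar>a * vxx t x\<bar> \<le> \<bar>vxx t x\<bar>"
    using a_pos a_le_1 mult_right_mono[of a 1 "\<bar>vxx t x\<bar>"] by (simp add: abs_mult)
  then show ?thesis
    using f_eq[OF t] bound_vt[OF t, of x] bound_vxx[OF t, of x] abs_triangle_ineq4[of "vt t x" "a * vxx t x"]
    by simp
qed

lemma integral_heat_kernel_vxx:
  assumes s: "s \<in> {-1<..<0}" and \<tau>: "\<tau> > 0"
  shows "(\<integral>y. heat_kernel a \<tau> (y - x0) * vxx s y - heat_kernel_zz a \<tau> (y - x0) * v s y \<partial>lborel) = 0"
proof (rule Green_identity_lborel)
  have shift: "((\<lambda>y. y - x0) has_real_derivative 1) (at y)" for y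
    by (auto intro!: derivative_eq_intros)
  show "((\<lambda>y. heat_kernel a \<tau> (y - x0)) has_real_derivative heat_kernel_z a \<tau> (y - x0)) (at y)"
    "((\<lambda>y. heat_kernel_z a \<tau> (y - x0)) has_real_derivative heat_kernel_zz a \<tau> (y - x0)) (at y)" for y
    using DERIV_chain2[OF has_real_derivative_heat_kernel[OF a_pos \<tau>] shift]
      DERIV_chain2[OF has_real_derivative_heat_kernel_z[OF a_pos \<tau>] shift]
    by simp_all
  show "(v s has_real_derivative vx s y) (at y)" "(vx s has_real_derivative vxx s y) (at y)" for y
    using deriv_x[OF s] deriv_xx[OF s] by simp_all
  show "continuous_on UNIV (vxx s)"
    by (rule continuous_on_Times_UNIV_slice[OF continuous_vxx s])
  show "continuous_on UNIV (\<lambda>y. heat_kernel_zz a \<tau> (y - x0))"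
    by (rule continuous_on_heat_kernel_zz[OF a_pos \<tau>])
  show "\<bar>v s y\<bar> \<le> max Bv Bx" "\<bar>vx s y\<bar> \<le> max Bv Bx" for y
    using bound_v[of s y] bound_vx[OF s, of y] s by auto
  show "((\<lambda>y. heat_kernel a \<tau> (y - x0)) \<longlongrightarrow> 0) at_top" "((\<lambda>y. heat_kernel a \<tau> (y - x0)) \<longlongrightarrow> 0) at_bot"
    "((\<lambda>y. heat_kernel_z a \<tau> (y - x0)) \<longlongrightarrow> 0) at_top" "((\<lambda>y. heat_kernel_z a \<tau> (y - x0)) \<longlongrightarrow> 0) at_bot"
    using heat_kernel_tendsto_infinity[OF a_pos \<tau>] by auto
  have "s \<in> {-1..0}" using s by auto
  then show "integrable lborel (\<lambda>y. heat_kernel a \<tau> (y - x0) * vxx s y - heat_kernel_zz a \<tau> (y - x0) * v s y)"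
    by (intro Bochner_Integration.integrable_diff
        integrable_heat_kernel_mult_bounded[OF a_pos \<tau> vxx_measurable[OF s] bound_vxx[OF s]]
        integrable_heat_kernel_zz_mult_bounded[OF a_pos \<tau> v_measurable bound_v])
qed

definition weighted_forcing :: "real \<Rightarrow> real" where
  "weighted_forcing t = (\<integral>x. eta x * (f t x)\<^sup>2 \<partial>lborel)"

definition total_weighted_forcing :: real where
  "total_weighted_forcing = (LINT t:{-1<..<0}|lborel. weighted_forcing t)"

definition initial_weighted_energy :: real where
  "initial_weighted_energy = (\<integral>x. eta x * (v (-1) x)\<^sup>2 \<partial>lborel)"

lemma weighted_forcing_nonneg: "weighted_forcing t \<ge> 0"
  unfolding weighted_forcing_def by (rule weighted_sq_integral_nonneg)

lemma weighted_forcing_le: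
  assumes t: "t \<in> {-1<..<0}"
  shows "weighted_forcing t \<le> (Bt + Bxx)\<^sup>2 * (\<integral>x. eta x \<partial>lborel)"
proof -
  have "weighted_forcing t \<le> (\<integral>x. eta x * (Bt + Bxx)\<^sup>2 \<partial>lborel)"
    unfolding weighted_forcing_def
  proof (rule integral_mono)
    show "integrable lborel (\<lambda>x. eta x * (f t x)\<^sup>2)"
      by (rule integrable_eta_mult_sq_bounded[OF f_measurable[OF t] f_abs_le[OF t]])
    show "integrable lborel (\<lambda>x. eta x * (Bt + Bxx)\<^sup>2)"
      using integrable_eta by simp
    fix x
    have "\<bar>f t x\<bar> \<le> \<bar>Bt + Bxx\<bar>" using f_abs_le[OF t, of x] by linarith
    then have "(f t x)\<^sup>2 \<le> (Bt + Bxx)\<^sup>2" by (simp add: abs_le_square_iff)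
    then show "eta x * (f t x)\<^sup>2 \<le> eta x * (Bt + Bxx)\<^sup>2"
      using eta_pos[of x] by (simp add: mult_left_mono)
  qed
  then show ?thesis by (simp add: mult.commute)
qed

text \<open>Measurability in \<open>t\<close> comes from Fubini applied to the jointly continuous integrand.\<close>

lemma weighted_forcing_measurable:
  "(\<lambda>t. indicator {-1<..<0} t * weighted_forcing t) \<in> borel_measurable lborel"
proof -
  define G where "G = (\<lambda>p::real \<times> real. indicator ({-1<..<0} \<times> UNIV) p *\<^sub>R (\<lambda>(t, x). eta x * (f t x)\<^sup>2) p)"
  have "continuous_on ({-1<..<0} \<times> UNIV) (\<lambda>p. eta (snd p) * ((\<lambda>(t, x). vt t x) p - a * (\<lambda>(t, x). vxx t x) p)\<^sup>2)"
    unfolding eta_def by (intro continuous_intros continuous_vt continuous_vxx) auto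
  then have cont: "continuous_on ({-1<..<0} \<times> UNIV) (\<lambda>(t, x). eta x * (f t x)\<^sup>2)"
    by (rule continuous_on_eq) (auto simp: f_eq)
  have "G \<in> borel_measurable borel"
    unfolding G_def by (rule borel_measurable_continuous_on_indicator) (use cont in \<open>auto intro!: borel_open open_Times\<close>)
  then have "G \<in> borel_measurable (lborel \<Otimes>\<^sub>M lborel)"
    by (simp add: lborel_prod)
  then have "(\<lambda>t. \<integral>x. G (t, x) \<partial>lborel) \<in> borel_measurable lborel"
    by (intro lborel.borel_measurable_lebesgue_integral) simp
  moreover have "(\<lambda>t. \<integral>x. G (t, x) \<partial>lborel) = (\<lambda>t. indicator {-1<..<0} t * weighted_forcing t)"
    by (auto simp: G_def weighted_forcing_def indicator_def fun_eq_iff)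
  ultimately show ?thesis by simp
qed

lemma weighted_forcing_set_integrable: "set_integrable lborel {-1<..<0} weighted_forcing"
  unfolding set_integrable_def
proof (rule Bochner_Integration.integrable_bound)
  define K where "K = (Bt + Bxx)\<^sup>2 * (\<integral>x. eta x \<partial>lborel)"
  show "integrable lborel (\<lambda>t::real. indicator {-1<..<0} t * K)"
    by (intro integrable_mult_left, rule integrable_real_indicator) simp_all
  show "(\<lambda>t. indicator {-1<..<0} t *\<^sub>R weighted_forcing t) \<in> borel_measurable lborel"
    using weighted_forcing_measurable by simp
  have "weighted_forcing t \<le> \<bar>K\<bar>" if "t \<in> {-1<..<0}" for t
    using weighted_forcing_le[OF that] unfolding K_def by linarith
  then show "AE t in lborel. norm (indicator {-1<..<0} t *\<^sub>R weighted_forcing t) \<le> norm (indicator {-1<..<0} t * K)"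
    using weighted_forcing_nonneg by (intro AE_I2) (auto simp: indicator_def)
qed

lemma total_weighted_forcing_nonneg: "total_weighted_forcing \<ge> 0"
  unfolding total_weighted_forcing_def set_lebesgue_integral_def
  by (intro integral_nonneg_AE AE_I2) (simp add: weighted_forcing_nonneg)

lemma initial_weighted_energy_nonneg: "initial_weighted_energy \<ge> 0"
  unfolding initial_weighted_energy_def by (rule weighted_sq_integral_nonneg)

end


section \<open>Duhamel's formula at a point\<close>

locale heat_representation = bounded_heat_solution +
  fixes t0 x0 :: real
  assumes t0: "-1 < t0" "t0 < 0"
begin

definition backward_kernel :: "real \<Rightarrow> real \<Rightarrow> real" where
  "backward_kernel s y = heat_kernel a (t0 - s) (y - x0)"

definition Phi :: "real \<Rightarrow> real" where
  "Phi s = (\<integral>y. backward_kernel s y * v s y \<partial>lborel)"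

definition psi :: "real \<Rightarrow> real" where
  "psi s = (\<integral>y. backward_kernel s y * f s y \<partial>lborel)"

lemma has_real_derivative_backward_kernel:
  "s < t0 \<Longrightarrow> ((\<lambda>s. backward_kernel s y) has_real_derivative - a * heat_kernel_zz a (t0 - s) (y - x0)) (at s)"
  unfolding backward_kernel_def by (rule has_real_derivative_heat_kernel_backward[OF a_pos])

text \<open>The \<open>v\<^sub>x\<^sub>x\<close> part of \<open>v\<^sub>t\<close> cancels against the time derivative of the kernel.\<close>

lemma integral_time_derivative_eq_psi:
  assumes s: "s \<in> {-1<..<t0}"
  shows "(\<integral>y. - a * heat_kernel_zz a (t0 - s) (y - x0) * v s y + backward_kernel s y * vt s y \<partial>lborel) = psi s"
proof -
  have s': "s \<in> {-1<..<0}" "s \<in> {-1..0}" and \<tau>: "t0 - s > 0" using s t0 by auto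
  have eq: "- a * heat_kernel_zz a (t0 - s) (y - x0) * v s y + backward_kernel s y * vt s y
      = backward_kernel s y * f s y
        + a * (heat_kernel a (t0 - s) (y - x0) * vxx s y - heat_kernel_zz a (t0 - s) (y - x0) * v s y)" for y
    unfolding backward_kernel_def f_eq[OF s'(1)] by (simp add: algebra_simps)
  have "integrable lborel (\<lambda>y. backward_kernel s y * f s y)"
    unfolding backward_kernel_def by (rule integrable_heat_kernel_mult_bounded[OF a_pos \<tau> f_measurable[OF s'(1)] f_abs_le[OF s'(1)]])
  moreover have "integrable lborel (\<lambda>y. heat_kernel a (t0 - s) (y - x0) * vxx s y - heat_kernel_zz a (t0 - s) (y - x0) * v s y)"
    by (intro Bochner_Integration.integrable_diff
        integrable_heat_kernel_mult_bounded[OF a_pos \<tau> vxx_measurable[OF s'(1)] bound_vxx[OF s'(1)]]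
        integrable_heat_kernel_zz_mult_bounded[OF a_pos \<tau> v_measurable[OF s'(2)] bound_v[OF s'(2)]])
  ultimately show ?thesis
    unfolding eq psi_def using integral_heat_kernel_vxx[OF s'(1) \<tau>] by simp
qed

lemma time_derivative_abs_le:
  assumes \<tau>: "0 < \<tau>1" "\<tau>1 \<le> t0 - t" "t0 - t \<le> \<tau>2" and t: "t \<in> {-1<..<0}"
  shows "\<bar>- a * heat_kernel_zz a (t0 - t) (y - x0) * v t y + backward_kernel t y * vt t y\<bar>
    \<le> (sqrt (\<tau>2 / \<tau>1) * \<bar>Bv\<bar> / (4 * a * \<tau>1\<^sup>2) * (y - x0)\<^sup>2
        + sqrt (\<tau>2 / \<tau>1) * (\<bar>Bv\<bar> / (2 * \<tau>1) + \<bar>Bt\<bar>)) * heat_kernel a \<tau>2 (y - x0)"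
proof -
  let ?K = "sqrt (\<tau>2 / \<tau>1) * heat_kernel a \<tau>2 (y - x0)"
  have vb: "\<bar>v t y\<bar> \<le> \<bar>Bv\<bar>" "\<bar>vt t y\<bar> \<le> \<bar>Bt\<bar>"
    using bound_v[of t y] bound_vt[OF t, of y] t by auto
  have kb: "\<bar>heat_kernel_zz a (t0 - t) (y - x0)\<bar> \<le> ((y - x0)\<^sup>2 / (4*a\<^sup>2*\<tau>1\<^sup>2) + 1 / (2*a*\<tau>1)) * ?K"
    by (rule heat_kernel_zz_le_rescaled[OF a_pos \<tau>])
  have "\<bar>backward_kernel t y\<bar> \<le> ?K"
    unfolding backward_kernel_def by (rule heat_kernel_le_rescaled[OF a_pos \<tau>])
  moreover have "0 \<le> ?K"
    using heat_kernel_pos[OF a_pos, of \<tau>2 "y - x0"] \<tau> by simp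
  ultimately have "a * \<bar>heat_kernel_zz a (t0 - t) (y - x0)\<bar> * \<bar>v t y\<bar> + \<bar>backward_kernel t y\<bar> * \<bar>vt t y\<bar>
      \<le> a * (((y - x0)\<^sup>2 / (4*a\<^sup>2*\<tau>1\<^sup>2) + 1 / (2*a*\<tau>1)) * ?K) * \<bar>Bv\<bar> + ?K * \<bar>Bt\<bar>"
    using a_pos \<tau> vb kb by (intro add_mono mult_mono mult_left_mono) auto
  moreover have "\<bar>- a * heat_kernel_zz a (t0 - t) (y - x0) * v t y + backward_kernel t y * vt t y\<bar>
      \<le> a * \<bar>heat_kernel_zz a (t0 - t) (y - x0)\<bar> * \<bar>v t y\<bar> + \<bar>backward_kernel t y\<bar> * \<bar>vt t y\<bar>"
    using a_pos abs_triangle_ineq[of "- a * heat_kernel_zz a (t0 - t) (y - x0) * v t y" "backward_kernel t y * vt t y"]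
    by (simp add: abs_mult)
  ultimately have "\<bar>- a * heat_kernel_zz a (t0 - t) (y - x0) * v t y + backward_kernel t y * vt t y\<bar>
      \<le> a * (((y - x0)\<^sup>2 / (4*a\<^sup>2*\<tau>1\<^sup>2) + 1 / (2*a*\<tau>1)) * ?K) * \<bar>Bv\<bar> + ?K * \<bar>Bt\<bar>"
    by linarith
  also have "\<dots> = (sqrt (\<tau>2 / \<tau>1) * \<bar>Bv\<bar> / (4 * a * \<tau>1\<^sup>2) * (y - x0)\<^sup>2
        + sqrt (\<tau>2 / \<tau>1) * (\<bar>Bv\<bar> / (2 * \<tau>1) + \<bar>Bt\<bar>)) * heat_kernel a \<tau>2 (y - x0)"
    using a_pos \<tau> by (simp add: field_simps power2_eq_square)
  finally show ?thesis .
qed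

lemma Phi_has_real_derivative:
  assumes s: "s \<in> {-1<..<t0}"
  shows "(Phi has_real_derivative psi s) (at s)"
proof -
  define c d where "c = (s - 1) / 2" and "d = (s + t0) / 2"
  define \<tau>1 \<tau>2 where "\<tau>1 = t0 - d" and "\<tau>2 = t0 - c"
  have cd: "c < s" "s < d" and \<tau>: "0 < \<tau>1" using s t0 unfolding c_def d_def \<tau>1_def by auto
  have in_strip: "t \<in> {-1<..<0}" "t \<in> {-1..0}" "t < t0" "\<tau>1 \<le> t0 - t" "t0 - t \<le> \<tau>2" if "t \<in> {c<..<d}" for t
    using that s t0 unfolding c_def d_def \<tau>1_def \<tau>2_def by auto
  have "((\<lambda>t. \<integral>y. backward_kernel t y * v t y \<partial>lborel) has_real_derivative
      (\<integral>y. - a * heat_kernel_zz a (t0 - s) (y - x0) * v s y + backward_kernel s y * vt s y \<partial>lborel)) (at s)"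
  proof (rule has_real_derivative_integral[OF cd, where
        u'="\<lambda>t y. - a * heat_kernel_zz a (t0 - t) (y - x0) * v t y + backward_kernel t y * vt t y"])
    fix t y assume t: "t \<in> {c<..<d}"
    show "((\<lambda>t. backward_kernel t y * v t y) has_real_derivative
        - a * heat_kernel_zz a (t0 - t) (y - x0) * v t y + backward_kernel t y * vt t y) (at t)"
      using DERIV_mult[OF has_real_derivative_backward_kernel deriv_t] in_strip[OF t]
      by (simp add: mult.commute)
    show "\<bar>- a * heat_kernel_zz a (t0 - t) (y - x0) * v t y + backward_kernel t y * vt t y\<bar>
      \<le> (sqrt (\<tau>2 / \<tau>1) * \<bar>Bv\<bar> / (4 * a * \<tau>1\<^sup>2) * (y - x0)\<^sup>2
        + sqrt (\<tau>2 / \<tau>1) * (\<bar>Bv\<bar> / (2 * \<tau>1) + \<bar>Bt\<bar>)) * heat_kernel a \<tau>2 (y - x0)"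
      using time_derivative_abs_le[OF \<tau>] in_strip[OF t] by simp
  next
    fix t assume t: "t \<in> {c<..<d}"
    then show "(\<lambda>y. backward_kernel t y * v t y) \<in> borel_measurable lborel"
      using v_measurable[OF in_strip(2)] unfolding backward_kernel_def by measurable
    have "0 < t0 - t" using in_strip(3)[OF t] by simp
    then show "integrable lborel (\<lambda>y. backward_kernel t y * v t y)"
      unfolding backward_kernel_def
      by (rule integrable_heat_kernel_mult_bounded[OF a_pos _ v_measurable bound_v]) (use in_strip[OF t] in auto)
  next
    have "s \<in> {-1<..<0}" "s \<in> {-1..0}" using s t0 by auto
    then show "(\<lambda>y. - a * heat_kernel_zz a (t0 - s) (y - x0) * v s y + backward_kernel s y * vt s y) \<in> borel_measurable lborel"
      using v_measurable vt_measurable unfolding backward_kernel_def by measurable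
    show "integrable lborel (\<lambda>y. (sqrt (\<tau>2 / \<tau>1) * \<bar>Bv\<bar> / (4 * a * \<tau>1\<^sup>2) * (y - x0)\<^sup>2
        + sqrt (\<tau>2 / \<tau>1) * (\<bar>Bv\<bar> / (2 * \<tau>1) + \<bar>Bt\<bar>)) * heat_kernel a \<tau>2 (y - x0))"
      using \<tau> cd unfolding \<tau>2_def d_def \<tau>1_def by (intro integrable_heat_kernel_quadratic a_pos) auto
  qed
  then show ?thesis
    using integral_time_derivative_eq_psi[OF s] unfolding Phi_def by simp
qed

lemma backward_kernel_mult_v_abs_le:
  assumes "0 < \<tau>1" "\<tau>1 \<le> t0 - t" "t0 - t \<le> \<tau>2" "t \<in> {-1..0}"
  shows "\<bar>backward_kernel t y * v t y\<bar> \<le> \<bar>Bv\<bar> * (sqrt (\<tau>2 / \<tau>1) * heat_kernel a \<tau>2 (y - x0))"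
proof -
  have "\<bar>backward_kernel t y\<bar> \<le> sqrt (\<tau>2 / \<tau>1) * heat_kernel a \<tau>2 (y - x0)"
    unfolding backward_kernel_def using assms by (intro heat_kernel_le_rescaled a_pos)
  moreover have "\<bar>v t y\<bar> \<le> \<bar>Bv\<bar>"
    using bound_v[of t y] assms(4) by linarith
  ultimately show ?thesis
    unfolding abs_mult by (simp add: mult_mono' mult.commute)
qed

lemma Phi_tendsto_initial: "(Phi \<longlongrightarrow> Phi (-1)) (at (-1) within {-1..t0})"
proof -
  define \<tau>1 \<tau>2 where "\<tau>1 = (t0 + 1) / 2" and "\<tau>2 = t0 + 1"
  have \<tau>: "0 < \<tau>1" "0 < \<tau>2" using t0 unfolding \<tau>1_def \<tau>2_def by auto
  have ev: "eventually (\<lambda>t. t \<in> {-1..0} \<and> \<tau>1 \<le> t0 - t \<and> t0 - t \<le> \<tau>2) (at (-1) within {-1..t0})"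
    unfolding eventually_at using t0
    by (intro exI[of _ "(t0 + 1) / 2"]) (auto simp: \<tau>1_def \<tau>2_def dist_real_def)
  have "((\<lambda>t. \<integral>y. backward_kernel t y * v t y \<partial>lborel) \<longlongrightarrow> (\<integral>y. backward_kernel (-1) y * v (-1) y \<partial>lborel))
      (at (-1) within {-1..t0})"
  proof (rule tendsto_integral_dominated_at[where w="\<lambda>y. \<bar>Bv\<bar> * (sqrt (\<tau>2 / \<tau>1) * heat_kernel a \<tau>2 (y - x0))"])
    show "eventually (\<lambda>t. (\<lambda>y. backward_kernel t y * v t y) \<in> borel_measurable lborel \<and>
        (\<forall>y. \<bar>backward_kernel t y * v t y\<bar> \<le> \<bar>Bv\<bar> * (sqrt (\<tau>2 / \<tau>1) * heat_kernel a \<tau>2 (y - x0))))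
        (at (-1) within {-1..t0})"
      using ev
    proof eventually_elim
      case (elim t)
      then have "v t \<in> borel_measurable lborel"
        using v_measurable by auto
      then have "(\<lambda>y. backward_kernel t y * v t y) \<in> borel_measurable lborel"
        unfolding backward_kernel_def by measurable
      then show ?case
        using backward_kernel_mult_v_abs_le[OF \<tau>(1)] elim by auto
    qed
    show "(\<lambda>y. backward_kernel (-1) y * v (-1) y) \<in> borel_measurable lborel"
      using v_measurable[of "-1"] unfolding backward_kernel_def by measurable
    show "integrable lborel (\<lambda>y. \<bar>Bv\<bar> * (sqrt (\<tau>2 / \<tau>1) * heat_kernel a \<tau>2 (y - x0)))"
      using integrable_heat_kernel[OF a_pos \<tau>(2), of x0] by simp
    fix y
    have "isCont (\<lambda>t. backward_kernel t y) (-1)"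
      using DERIV_isCont[OF has_real_derivative_backward_kernel[of "-1" y]] t0 by simp
    then have "((\<lambda>t. backward_kernel t y) \<longlongrightarrow> backward_kernel (-1) y) (at (-1) within {-1..t0})"
      unfolding isCont_def by (rule tendsto_within_subset) simp
    moreover have "((\<lambda>t. v t y) \<longlongrightarrow> v (-1) y) (at (-1) within {-1..t0})"
      by (rule tendsto_within_subset[OF tendsto_v_time]) (use t0 in auto)
    ultimately show "((\<lambda>t. backward_kernel t y * v t y) \<longlongrightarrow> backward_kernel (-1) y * v (-1) y) (at (-1) within {-1..t0})"
      by (rule tendsto_mult)
  qed
  then show ?thesis unfolding Phi_def by simp
qed

text \<open>In this form the limit \<open>s \<rightarrow> t0\<close> is dominated convergence against a fixed Gaussian.\<close>

lemma Phi_eq_std_normal_average: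
  assumes s: "s < t0"
  shows "Phi s = (\<integral>w. std_normal_density w * v s (x0 + sqrt (2 * a * (t0 - s)) * w) \<partial>lborel)"
proof -
  define \<sigma> where "\<sigma> = sqrt (2 * a * (t0 - s))"
  have \<sigma>: "\<sigma> > 0" unfolding \<sigma>_def using s a_pos by simp
  have "Phi s = (\<integral>y. normal_density x0 \<sigma> y * v s y \<partial>lborel)"
    unfolding Phi_def backward_kernel_def \<sigma>_def
    using heat_kernel_shift_eq_normal_density[OF a_pos, of "t0 - s"] s by simp
  also have "\<dots> = \<bar>\<sigma>\<bar> *\<^sub>R (\<integral>w. normal_density x0 \<sigma> (x0 + \<sigma> * w) * v s (x0 + \<sigma> * w) \<partial>lborel)"
    using \<sigma> by (intro lborel_integral_real_affine) simp
  also have "\<dots> = (\<integral>w. std_normal_density w * v s (x0 + \<sigma> * w) \<partial>lborel)"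
    using \<sigma> by (simp add: normal_density_affine)
  finally show ?thesis unfolding \<sigma>_def .
qed

lemma Phi_tendsto_final: "(Phi \<longlongrightarrow> v t0 x0) (at t0 within {-1..t0})"
proof -
  define \<sigma> where "\<sigma> t = sqrt (2 * a * (t0 - t))" for t
  have ev: "eventually (\<lambda>t. t \<in> {-1..0} \<and> t < t0) (at t0 within {-1..t0})"
    unfolding eventually_at_filter using t0 by (intro always_eventually) auto
  have "((\<lambda>t. \<integral>w. std_normal_density w * v t (x0 + \<sigma> t * w) \<partial>lborel) \<longlongrightarrow>
      (\<integral>w. std_normal_density w * v t0 x0 \<partial>lborel)) (at t0 within {-1..t0})"
  proof (rule tendsto_integral_dominated_at[where w="\<lambda>w. std_normal_density w * \<bar>Bv\<bar>"])
    show "eventually (\<lambda>t. (\<lambda>w. std_normal_density w * v t (x0 + \<sigma> t * w)) \<in> borel_measurable lborel \<and>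
        (\<forall>w. \<bar>std_normal_density w * v t (x0 + \<sigma> t * w)\<bar> \<le> std_normal_density w * \<bar>Bv\<bar>)) (at t0 within {-1..t0})"
      using ev
    proof eventually_elim
      case (elim t)
      have "v t \<in> borel_measurable borel" using v_measurable elim by simp
      then have "(\<lambda>w. std_normal_density w * v t (x0 + \<sigma> t * w)) \<in> borel_measurable lborel"
        by measurable
      moreover have "\<bar>v t (x0 + \<sigma> t * w)\<bar> \<le> \<bar>Bv\<bar>" for w
        using bound_v[of t "x0 + \<sigma> t * w"] elim by linarith
      then have "\<bar>std_normal_density w * v t (x0 + \<sigma> t * w)\<bar> \<le> std_normal_density w * \<bar>Bv\<bar>" for w
        by (simp add: abs_mult mult_left_mono)
      ultimately show ?case by auto
    qed
    fix w
    have "continuous_on {-1..t0} (\<lambda>t. (\<lambda>(t, x). v t x) (t, x0 + \<sigma> t * w))"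
      by (rule continuous_on_compose2[OF continuous_v]) (use t0 in \<open>auto simp: \<sigma>_def intro!: continuous_intros\<close>)
    then have "((\<lambda>t. v t (x0 + \<sigma> t * w)) \<longlongrightarrow> v t0 (x0 + \<sigma> t0 * w)) (at t0 within {-1..t0})"
      using t0 unfolding continuous_on_def by auto
    then show "((\<lambda>t. std_normal_density w * v t (x0 + \<sigma> t * w)) \<longlongrightarrow> std_normal_density w * v t0 x0)
        (at t0 within {-1..t0})"
      by (intro tendsto_mult_left) (simp add: \<sigma>_def)
  qed simp_all
  moreover have "eventually (\<lambda>t. (\<integral>w. std_normal_density w * v t (x0 + \<sigma> t * w) \<partial>lborel) = Phi t) (at t0 within {-1..t0})"
    using ev by eventually_elim (simp add: Phi_eq_std_normal_average \<sigma>_def)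
  ultimately show ?thesis
    by (simp add: tendsto_cong)
qed

lemma Duhamel_formula: "(psi has_integral (v t0 x0 - Phi (-1))) {-1<..<t0}"
proof -
  define \<Phi> where "\<Phi> s = (if s = t0 then v t0 x0 else Phi s)" for s
  have "continuous (at s within {-1..t0}) \<Phi>" if s: "s \<in> {-1..t0}" for s
  proof -
    consider "s = t0" | "s = -1" | "s \<in> {-1<..<t0}" using s t0 by fastforce
    then have "(Phi \<longlongrightarrow> \<Phi> s) (at s within {-1..t0})"
    proof cases
      case 3
      then have "isCont Phi s" using Phi_has_real_derivative by (blast intro: DERIV_isCont)
      then show ?thesis
        using 3 unfolding \<Phi>_def isCont_def by (auto intro: tendsto_within_subset)
    qed (use Phi_tendsto_initial Phi_tendsto_final t0 in \<open>auto simp: \<Phi>_def\<close>)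
    moreover have "eventually (\<lambda>t. t < t0) (at s within {-1..t0})"
    proof (cases "s = t0")
      case True
      then show ?thesis unfolding eventually_at_filter by (intro always_eventually) auto
    next
      case False
      then have "eventually (\<lambda>t. t \<in> {..<t0}) (nhds s)" using s by (intro eventually_nhds_in_open) auto
      then show ?thesis unfolding eventually_at_filter by eventually_elim auto
    qed
    then have "eventually (\<lambda>t. Phi t = \<Phi> t) (at s within {-1..t0})"
      by eventually_elim (simp add: \<Phi>_def)
    ultimately show ?thesis
      unfolding continuous_within using tendsto_cong by blast
  qed
  then have "(psi has_integral (\<Phi> t0 - \<Phi> (-1))) {-1..t0}"
  proof (intro fundamental_theorem_of_calculus_interior)
    fix s assume s: "s \<in> {-1<..<t0}"
    have "(\<Phi> has_real_derivative psi s) (at s)"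
      by (rule has_field_derivative_transform_within_open[OF Phi_has_real_derivative[OF s] _ s])
         (auto simp: \<Phi>_def)
    then show "(\<Phi> has_vector_derivative psi s) (at s)"
      by (simp add: has_real_derivative_iff_has_vector_derivative)
  qed (use t0 in \<open>auto simp: continuous_on_eq_continuous_within\<close>)
  then show ?thesis
    using t0 by (simp add: \<Phi>_def has_integral_open_interval[of _ _ "-1" t0, unfolded box_real])
qed

lemma Phi_initial_sq_le:
  "(Phi (-1))\<^sup>2 \<le> exp (1 + \<bar>x0\<bar>) / sqrt (pi * a * (t0 + 1)) * initial_weighted_energy"
proof (rule sq_le_mult_if_AM_GM_bounds)
  have \<tau>: "t0 + 1 > 0" "a * (t0 + 1) \<le> 1" using a_pos a_le_1 t0 by (auto intro!: mult_le_one)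
  have m1: "(-1::real) \<in> {-1..0}" by simp
  show "\<bar>Phi (-1)\<bar> \<le> exp (1 + \<bar>x0\<bar>) / sqrt (pi * a * (t0 + 1)) / (2 * eps)
      + eps / 2 * initial_weighted_energy" if "eps > 0" for eps
    using abs_integral_heat_kernel_mult_le[OF a_pos \<tau> v_measurable[OF m1] bound_v[OF m1] that, of x0]
    unfolding Phi_def backward_kernel_def initial_weighted_energy_def by simp
qed (use a_pos t0 initial_weighted_energy_nonneg in auto)

lemma psi_abs_le:
  assumes s: "s \<in> {-1<..<t0}" and eps: "eps > 0"
  shows "\<bar>psi s\<bar> \<le> exp (1 + \<bar>x0\<bar>) / sqrt (pi * a) / (2 * eps) * (1 / sqrt (t0 - s)) + eps / 2 * weighted_forcing s"
proof -
  have \<tau>: "t0 - s > 0" and "a * (t0 - s) \<le> 1" and s': "s \<in> {-1<..<0}"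
    using a_pos a_le_1 t0 s by (auto intro!: mult_le_one)
  then have "\<bar>psi s\<bar> \<le> exp (1 + \<bar>x0\<bar>) / sqrt (pi * a * (t0 - s)) / (2 * eps) + eps / 2 * weighted_forcing s"
    using abs_integral_heat_kernel_mult_le[OF a_pos \<tau> _ f_measurable[OF s'] f_abs_le[OF s'] eps, of x0]
    unfolding psi_def backward_kernel_def weighted_forcing_def by simp
  then show ?thesis by (simp add: real_sqrt_mult ac_simps)
qed

lemma weighted_forcing_integral_le:
  "weighted_forcing integrable_on {-1<..<t0}"
  "integral {-1<..<t0} weighted_forcing \<le> total_weighted_forcing"
proof -
  have int: "set_integrable lborel {-1<..<t0} weighted_forcing"
    by (rule set_integrable_subset[OF weighted_forcing_set_integrable]) (use t0 in auto)
  then show "weighted_forcing integrable_on {-1<..<t0}"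
    by (rule set_borel_integral_eq_integral)
  have "integral {-1<..<t0} weighted_forcing = (LINT t:{-1<..<t0}|lborel. weighted_forcing t)"
    using set_borel_integral_eq_integral(2)[OF int] by simp
  also have "\<dots> \<le> total_weighted_forcing"
    unfolding total_weighted_forcing_def set_lebesgue_integral_def
  proof (rule integral_mono)
    show "integrable lborel (\<lambda>t. indicator {-1<..<t0} t *\<^sub>R weighted_forcing t)"
      using int by (simp add: set_integrable_def)
    show "integrable lborel (\<lambda>t. indicator {-1<..<0} t *\<^sub>R weighted_forcing t)"
      using weighted_forcing_set_integrable by (simp add: set_integrable_def)
    show "indicator {-1<..<t0} t *\<^sub>R weighted_forcing t \<le> indicator {-1<..<0} t *\<^sub>R weighted_forcing t" for t
      using weighted_forcing_nonneg[of t] t0 by (auto simp: indicator_def)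
  qed
  finally show "integral {-1<..<t0} weighted_forcing \<le> total_weighted_forcing" .
qed

text \<open>Integrating the pointwise bound on \<open>\<psi>\<close> in time before optimising over \<open>eps\<close> is what
  produces the factor \<open>sqrt (t0 + 1)\<close>.\<close>

lemma Duhamel_term_sq_le:
  "(v t0 x0 - Phi (-1))\<^sup>2 \<le> exp (1 + \<bar>x0\<bar>) / sqrt (pi * a) * (2 * sqrt (t0 + 1)) * total_weighted_forcing"
proof (rule sq_le_mult_if_AM_GM_bounds)
  fix eps :: real assume eps: "eps > 0"
  define c where "c = exp (1 + \<bar>x0\<bar>) / sqrt (pi * a) / (2 * eps)"
  define h where "h s = c * (1 / sqrt (t0 - s)) + eps / 2 * weighted_forcing s" for s
  have h: "(h has_integral (c * (2 * sqrt (t0 + 1)) + eps / 2 * integral {-1<..<t0} weighted_forcing)) {-1<..<t0}"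
    unfolding h_def using has_integral_inverse_sqrt_diff[of "-1" t0] t0
    by (intro has_integral_add has_integral_mult_right integrable_integral weighted_forcing_integral_le) simp_all
  have "\<bar>v t0 x0 - Phi (-1)\<bar> = norm (integral {-1<..<t0} psi)"
    using integral_unique[OF Duhamel_formula] by simp
  also have "\<dots> \<le> integral {-1<..<t0} h"
    using Duhamel_formula h psi_abs_le[OF _ eps]
    by (intro integral_norm_bound_integral) (auto simp: h_def c_def)
  also have "\<dots> \<le> c * (2 * sqrt (t0 + 1)) + eps / 2 * total_weighted_forcing"
    using integral_unique[OF h] weighted_forcing_integral_le(2) eps by simp
  finally show "\<bar>v t0 x0 - Phi (-1)\<bar> \<le> exp (1 + \<bar>x0\<bar>) / sqrt (pi * a) * (2 * sqrt (t0 + 1)) / (2 * eps)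
      + eps / 2 * total_weighted_forcing"
    unfolding c_def by simp
qed (use a_pos t0 total_weighted_forcing_nonneg in auto)

text \<open>The weight \<open>\<eta>(x0)\<close> exactly compensates the factor \<open>exp |x0|\<close> in both bounds.\<close>

lemma weighted_pointwise_estimate:
  "sqrt (t0 + 1) * eta x0 * (v t0 x0)\<^sup>2
    \<le> 2 * exp 1 / sqrt (pi * a) * (total_weighted_forcing + initial_weighted_energy)"
proof -
  define X Y where "X = Phi (-1)" and "Y = v t0 x0 - Phi (-1)"
  define c where "c = exp 1 / sqrt (pi * a)"
  define w where "w = sqrt (t0 + 1) * eta x0"
  have pos: "sqrt (t0 + 1) > 0" "sqrt (pi * a) > 0" "w \<ge> 0" "c \<ge> 0"
    using t0 a_pos eta_pos[of x0] unfolding w_def c_def by auto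
  have eta_exp: "eta x0 * exp (1 + \<bar>x0\<bar>) = exp 1 / 2"
    unfolding eta_def by (simp add: exp_add exp_minus field_simps)
  have "w * X\<^sup>2 \<le> w * (exp (1 + \<bar>x0\<bar>) / sqrt (pi * a * (t0 + 1)) * initial_weighted_energy)"
    unfolding X_def using Phi_initial_sq_le pos by (intro mult_left_mono)
  also have "\<dots> = eta x0 * exp (1 + \<bar>x0\<bar>) / sqrt (pi * a) * initial_weighted_energy"
    using pos unfolding w_def real_sqrt_mult[of "pi * a" "t0 + 1"] by (simp add: field_simps)
  also have "\<dots> = c / 2 * initial_weighted_energy"
    unfolding eta_exp c_def by simp
  finally have X: "w * X\<^sup>2 \<le> c / 2 * initial_weighted_energy" .
  have "w * Y\<^sup>2 \<le> w * (exp (1 + \<bar>x0\<bar>) / sqrt (pi * a) * (2 * sqrt (t0 + 1)) * total_weighted_forcing)"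
    unfolding Y_def using Duhamel_term_sq_le pos by (intro mult_left_mono)
  also have "\<dots> = 2 * (sqrt (t0 + 1) * sqrt (t0 + 1)) * (eta x0 * exp (1 + \<bar>x0\<bar>)) / sqrt (pi * a)
      * total_weighted_forcing"
    using pos unfolding w_def by (simp add: field_simps del: real_sqrt_mult_self)
  also have "\<dots> = c * (t0 + 1) * total_weighted_forcing"
    using t0 a_pos unfolding eta_exp c_def by (simp add: field_simps)
  also have "\<dots> \<le> c * total_weighted_forcing"
    using pos t0 total_weighted_forcing_nonneg by (intro mult_right_mono mult_left_le) auto
  finally have Y: "w * Y\<^sup>2 \<le> c * total_weighted_forcing" .
  have "(v t0 x0)\<^sup>2 \<le> 2 * X\<^sup>2 + 2 * Y\<^sup>2"
    using sum_squares_ge_zero[of "X - Y" 0] unfolding X_def Y_def by (simp add: power2_eq_square algebra_simps)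
  then have "w * (v t0 x0)\<^sup>2 \<le> 2 * (w * X\<^sup>2) + 2 * (w * Y\<^sup>2)"
    using mult_left_mono[OF _ pos(3), of "(v t0 x0)\<^sup>2" "2 * X\<^sup>2 + 2 * Y\<^sup>2"] by (simp add: algebra_simps)
  also have "\<dots> \<le> c * initial_weighted_energy + 2 * (c * total_weighted_forcing)"
    using X Y by linarith
  also have "\<dots> \<le> 2 * c * (total_weighted_forcing + initial_weighted_energy)"
    using mult_nonneg_nonneg[OF pos(4) initial_weighted_energy_nonneg] by (simp add: algebra_simps)
  finally show ?thesis unfolding w_def c_def by simp
qed

end

theorem proposition7:
  fixes lam :: real
  assumes "lam > 0"
  shows "\<exists>C. \<forall>(a0::real) (v::real\<Rightarrow>real\<Rightarrow>real) (f::real\<Rightarrow>real\<Rightarrow>real)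
      (vt::real\<Rightarrow>real\<Rightarrow>real) (vx::real\<Rightarrow>real\<Rightarrow>real) (vxx::real\<Rightarrow>real\<Rightarrow>real).
    a0 \<in> {lam..1}
    \<and> continuous_on ({-1..0} \<times> UNIV) (\<lambda>(t,x). v t x)
    \<and> continuous_on ({-1<..<0} \<times> UNIV) (\<lambda>(t,x). vt t x)
    \<and> continuous_on ({-1<..<0} \<times> UNIV) (\<lambda>(t,x). vx t x)
    \<and> continuous_on ({-1<..<0} \<times> UNIV) (\<lambda>(t,x). vxx t x)
    \<and> (\<forall>t\<in>{-1<..<0}. \<forall>x.
          ((\<lambda>s. v s x) has_real_derivative vt t x) (at t)
        \<and> ((\<lambda>y. v t y) has_real_derivative vx t x) (at x)
        \<and> ((\<lambda>y. vx t y) has_real_derivative vxx t x) (at x)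
        \<and> vt t x - a0 * vxx t x = f t x)
    \<and> bounded ((\<lambda>(t,x). v t x) ` ({-1..0} \<times> UNIV))
    \<and> bounded ((\<lambda>(t,x). vt t x) ` ({-1<..<0} \<times> UNIV))
    \<and> bounded ((\<lambda>(t,x). vx t x) ` ({-1<..<0} \<times> UNIV))
    \<and> bounded ((\<lambda>(t,x). vxx t x) ` ({-1<..<0} \<times> UNIV))
    \<longrightarrow> (\<forall>t\<in>{-1<..<0}. \<forall>x.
          sqrt (t + 1) * eta x * (v t x)\<^sup>2
          \<le> C * ((LBINT t:{-1<..<0}. LBINT x. eta x * (f t x)\<^sup>2)
                 + (LBINT x. eta x * (v (-1) x)\<^sup>2)))"
proof (rule exI[of _ "2 * exp 1 / sqrt (pi * lam)"], intro allI impI ballI, elim conjE, goal_cases)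
  case (1 a0 v f vt vx vxx t x)
  obtain Bv Bt Bx Bxx where
    "\<And>t x. t \<in> {-1..0} \<Longrightarrow> \<bar>v t x\<bar> \<le> Bv" "\<And>t x. t \<in> {-1<..<0} \<Longrightarrow> \<bar>vt t x\<bar> \<le> Bt"
    "\<And>t x. t \<in> {-1<..<0} \<Longrightarrow> \<bar>vx t x\<bar> \<le> Bx" "\<And>t x. t \<in> {-1<..<0} \<Longrightarrow> \<bar>vxx t x\<bar> \<le> Bxx"
    using bounded_image_Times_UNIV_abs_le[OF 1(8)] bounded_image_Times_UNIV_abs_le[OF 1(9)]
      bounded_image_Times_UNIV_abs_le[OF 1(10)] bounded_image_Times_UNIV_abs_le[OF 1(11)] by metis
  then interpret heat_representation a0 v vt vx vxx f Bv Bt Bx Bxx t x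
    using 1 assms by unfold_locales auto
  have "sqrt (t + 1) * eta x * (v t x)\<^sup>2
      \<le> 2 * exp 1 / sqrt (pi * a0) * (total_weighted_forcing + initial_weighted_energy)"
    by (rule weighted_pointwise_estimate)
  also have "\<dots> \<le> 2 * exp 1 / sqrt (pi * lam) * (total_weighted_forcing + initial_weighted_energy)"
    using 1(2) assms total_weighted_forcing_nonneg initial_weighted_energy_nonneg
    by (intro mult_right_mono divide_left_mono) auto
  finally show ?case
    unfolding total_weighted_forcing_def weighted_forcing_def initial_weighted_energy_def by simp
qed

end
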